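(* $\mathrm{LIM}_{\operatorname{non}(\mathcal N)}(\mathcal L)\supsetneq\mathcal L$; that is, there is a $\operatorname{non}(\mathcal N)$-sequence of Lebesgue measurable functions $\mathbb R\to\mathbb R$ converging pointwise to a function that is not Lebesgue measurable.
   Context: $\mathcal L$ is the family of Lebesgue measurable functions $\mathbb R\to\mathbb R$. For an infinite cardinal $\kappa$, a $\kappa$-sequence $(f_\alpha)_{\alpha<\kappa}$ of real functions converges pointwise to $f$ if for every $x$ and every $\varepsilon>0$ there is $\alpha_0<\kappa$ with $|f_\alpha(x)-f(x)|<\varepsilon$ for all $\alpha_0<\alpha<\kappa$; $\mathrm{LIM}_\kappa(\mathcal F)$ is the set of all pointwise limits of $\kappa$-sequences of elements of $\mathcal F$. $\operatorname{non}(\mathcal N)$ is the least cardinality of a non-null subset of $[0,1]$. *)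

theory Defs
  imports "HOL-Analysis.Analysis"
begin

text \<open>Null = Lebesgue null
  (lebesgue is the complete Lebesgue measure, so this is outer measure zero).\<close>
definition is_nonN :: "'a rel \<Rightarrow> bool" where
  "is_nonN r \<longleftrightarrow> Card_order r
     \<and> (\<exists>A::real set. A \<subseteq> {0..1} \<and> A \<notin> null_sets lebesgue \<and> (card_of A, r) \<in> ordIso)
     \<and> (\<forall>B::real set. B \<subseteq> {0..1} \<and> B \<notin> null_sets lebesgue \<longrightarrow> (r, card_of B) \<in> ordLeq)"

definition wo_pointwise_conv :: "'a rel \<Rightarrow> ('a \<Rightarrow> real \<Rightarrow> real) \<Rightarrow> (real \<Rightarrow> real) \<Rightarrow> bool" where
  "wo_pointwise_conv r f g \<longleftrightarrow>
     (\<forall>x. \<forall>\<epsilon>>0. \<exists>\<alpha>0\<in>Field r. \<forall>\<alpha>\<in>Field r.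
        (\<alpha>0, \<alpha>) \<in> r \<and> \<alpha> \<noteq> \<alpha>0 \<longrightarrow> \<bar>f \<alpha> x - g x\<bar> < \<epsilon>)"

definition LIM_wo :: "'a rel \<Rightarrow> (real \<Rightarrow> real) set \<Rightarrow> (real \<Rightarrow> real) set" where
  "LIM_wo r F = {g. \<exists>f. (\<forall>\<alpha>\<in>Field r. f \<alpha> \<in> F) \<and> wo_pointwise_conv r f g}"

end

theory Submission imports Defs begin
unbundle cardinal_syntax

text \<open>Take a non-null A \<subseteq> [0,1] of cardinality non(N) and enumerate it as e along the
  cardinal order r. A proper initial segment of r has smaller cardinality, so its image under e
  is null. By Vitali's construction A contains a non-measurable set S. The indicators of the
  null sets S \<inter> e ` underS r \<alpha> are measurable, and they converge pointwise to the indicator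
  of S, because a point e \<beta> of S is switched on at every stage above \<beta>.\<close>

lemma obtain_rational_transversal:
  fixes E :: "real set"
  obtains V where "V \<subseteq> E" and "\<And>x. x \<in> E \<Longrightarrow> \<exists>y\<in>V. x - y \<in> \<rat>"
    and "\<And>y y'. y \<in> V \<Longrightarrow> y' \<in> V \<Longrightarrow> y - y' \<in> \<rat> \<Longrightarrow> y = y'"
proof
  define v where "v x = (SOME y. y \<in> E \<and> x - y \<in> \<rat>)" for x
  have v_in: "v x \<in> E \<and> x - v x \<in> \<rat>" if "x \<in> E" for x
    unfolding v_def by (rule someI[of _ x]) (use that in auto)
  have v_eq: "v x = v x'" if "x - x' \<in> \<rat>" for x x'
  proof -
    have "x - y \<in> \<rat> \<longleftrightarrow> x' - y \<in> \<rat>" for y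
    proof
      assume "x - y \<in> \<rat>"
      from Rats_diff[OF this that] show "x' - y \<in> \<rat>" by simp
    next
      assume "x' - y \<in> \<rat>"
      from Rats_add[OF this that] show "x - y \<in> \<rat>" by simp
    qed
    then show ?thesis unfolding v_def by simp
  qed
  have v_idem: "v (v x) = v x" if "x \<in> E" for x
  proof (rule v_eq)
    show "v x - x \<in> \<rat>" using Rats_minus_iff[of "x - v x"] v_in[OF that] by simp
  qed
  show "v ` E \<subseteq> E" using v_in by auto
  show "\<exists>y\<in>v ` E. x - y \<in> \<rat>" if "x \<in> E" for x using v_in that by blast
  show "y = y'" if "y \<in> v ` E" "y' \<in> v ` E" and rat: "y - y' \<in> \<rat>" for y y'
    using that(1,2) v_eq[OF rat] v_idem by auto
qed

lemma disjoint_rational_translates: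
  fixes V :: "real set"
  assumes "\<And>y y'. y \<in> V \<Longrightarrow> y' \<in> V \<Longrightarrow> y - y' \<in> \<rat> \<Longrightarrow> y = y'"
    and "q \<in> \<rat>" "q' \<in> \<rat>" "q \<noteq> q'"
  shows "(+) q ` V \<inter> (+) q' ` V = {}"
proof (rule ccontr)
  assume "(+) q ` V \<inter> (+) q' ` V \<noteq> {}"
  then obtain y y' where y: "y \<in> V" "y' \<in> V" and eq: "q + y = q' + y'" by auto
  then have "y - y' = q' - q" by linarith
  then have "y = y'" using assms(1)[OF y] assms(2,3) by simp
  with eq assms(4) show False by simp
qed

text \<open>Finitely many disjoint translates of V fit into [-1, 2], so N \<cdot> measure V \<le> 3 for every N.\<close>
lemma measure_zero_if_disjoint_rational_translates:
  fixes V :: "real set"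
  assumes V: "V \<in> lmeasurable" "V \<subseteq> {0..1}"
    and disj: "\<And>y y'. y \<in> V \<Longrightarrow> y' \<in> V \<Longrightarrow> y - y' \<in> \<rat> \<Longrightarrow> y = y'"
  shows "measure lebesgue V = 0"
proof (rule ccontr)
  define T where "T q = (+) q ` V" for q :: real
  have T_lmeasurable: "T q \<in> lmeasurable" for q
    using V by (simp add: T_def measurable_translation)
  have measure_T: "measure lebesgue (T q) = measure lebesgue V" for q
    by (simp add: T_def measure_translation)
  assume "measure lebesgue V \<noteq> 0"
  then have pos: "measure lebesgue V > 0" using measure_nonneg[of lebesgue V] by linarith
  obtain N :: nat where N: "real N > 3 / measure lebesgue V" using reals_Archimedean2 by blast
  define F where "F = (\<lambda>n. 1 / real (Suc n)) ` {..<N}"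
  have card_F: "card F = N"
    unfolding F_def by (subst card_image) (auto simp: inj_on_def)
  have F_rat: "F \<subseteq> \<rat> \<inter> {0..1}" by (auto simp: F_def)
  have "N * measure lebesgue V = (\<Sum>q\<in>F. measure lebesgue (T q))"
    by (simp add: measure_T card_F)
  also have "\<dots> = measure lebesgue (\<Union>q\<in>F. T q)"
  proof (rule measure_finite_Union[symmetric])
    show "disjoint_family_on T F"
      using F_rat disjoint_rational_translates[OF disj]
      unfolding disjoint_family_on_def T_def by blast
    show "emeasure lebesgue (T q) \<noteq> \<infinity>" for q
      using T_lmeasurable[of q] by (auto simp: fmeasurable_def)
  qed (use T_lmeasurable in \<open>auto simp: F_def\<close>)
  also have "\<dots> \<le> measure lebesgue (cbox (-1) (2::real))"
  proof (rule measure_mono_fmeasurable)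
    show "(\<Union>q\<in>F. T q) \<subseteq> cbox (-1) 2" using F_rat V(2) by (force simp: T_def)
    show "(\<Union>q\<in>F. T q) \<in> sets lebesgue"
      using T_lmeasurable by (auto simp: F_def)
  qed auto
  finally have "N * measure lebesgue V \<le> 3" by simp
  moreover have "N * measure lebesgue V > 3" using N pos by (simp add: field_simps)
  ultimately show False by simp
qed

lemma non_null_has_nonmeasurable_subset:
  fixes E :: "real set"
  assumes "E \<subseteq> {0..1}" and "E \<notin> null_sets lebesgue"
  obtains S where "S \<subseteq> E" and "S \<notin> sets lebesgue"
proof -
  have "\<not> (\<forall>S\<subseteq>E. S \<in> sets lebesgue)"
  proof
    assume all_measurable: "\<forall>S\<subseteq>E. S \<in> sets lebesgue"
    obtain V :: "real set" where V: "V \<subseteq> E" and cover: "\<And>x. x \<in> E \<Longrightarrow> \<exists>y\<in>V. x - y \<in> \<rat>"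
      and disj: "\<And>y y'. y \<in> V \<Longrightarrow> y' \<in> V \<Longrightarrow> y - y' \<in> \<rat> \<Longrightarrow> y = y'"
      using obtain_rational_transversal[of E] by blast
    have "V \<in> lmeasurable"
      by (rule fmeasurableI2[of "cbox 0 1"]) (use V assms(1) all_measurable in auto)
    moreover from this have "measure lebesgue V = 0"
      using V assms(1) by (intro measure_zero_if_disjoint_rational_translates[OF _ _ disj]) auto
    ultimately have "(+) q ` V \<in> null_sets lebesgue" for q
      using measurable_translation[of V q] measure_translation[of q V]
      by (simp add: emeasure_eq_measure2 null_sets_def)
    then have "(\<Union>q\<in>\<rat> \<inter> {-1..1}. (+) q ` V) \<in> null_sets lebesgue"
      by (intro null_sets_UN' countable_Int1 countable_rat)
    moreover have "E \<subseteq> (\<Union>q\<in>\<rat> \<inter> {-1..1}. (+) q ` V)"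
    proof
      fix x assume "x \<in> E"
      with cover obtain y where "y \<in> V" "x - y \<in> \<rat>" by blast
      moreover have "x \<in> {0..1}" "y \<in> {0..1}" using \<open>x \<in> E\<close> \<open>y \<in> V\<close> V assms(1) by auto
      then have "x - y \<in> {-1..1}" by auto
      moreover have "x = (x - y) + y" by simp
      ultimately show "x \<in> (\<Union>q\<in>\<rat> \<inter> {-1..1}. (+) q ` V)"
        by (intro UN_I[of "x - y"] rev_image_eqI[of y]) auto
    qed
    ultimately have "E \<in> null_sets lebesgue"
      using completion.complete2 by blast
    with assms(2) show False by contradiction
  qed
  then show thesis using that by blast
qed

lemma LIM_woI:
  assumes "\<And>\<alpha>. \<alpha> \<in> Field r \<Longrightarrow> f \<alpha> \<in> F" and "wo_pointwise_conv r f g"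
  shows "g \<in> LIM_wo r F"
  using assms unfolding LIM_wo_def by blast

lemma subset_LIM_wo:
  assumes "Field r \<noteq> {}"
  shows "F \<subseteq> LIM_wo r F"
proof
  fix g assume "g \<in> F"
  moreover have "wo_pointwise_conv r (\<lambda>_. g) g"
    using assms unfolding wo_pointwise_conv_def by auto
  ultimately show "g \<in> LIM_wo r F" by (intro LIM_woI)
qed

lemma wo_pointwise_conv_indicator_underS:
  assumes "Field r \<noteq> {}" and "S \<subseteq> e ` Field r"
  shows "wo_pointwise_conv r (\<lambda>\<alpha>. indicator (S \<inter> e ` underS r \<alpha>)) (indicator S)"
  unfolding wo_pointwise_conv_def
proof (intro allI impI)
  fix x :: real and \<epsilon> :: real assume "\<epsilon> > 0"
  show "\<exists>\<alpha>0\<in>Field r. \<forall>\<alpha>\<in>Field r. (\<alpha>0, \<alpha>) \<in> r \<and> \<alpha> \<noteq> \<alpha>0 \<longrightarrow>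
          \<bar>indicator (S \<inter> e ` underS r \<alpha>) x - indicator S x\<bar> < \<epsilon>"
  proof (cases "x \<in> S")
    case True
    with assms(2) obtain \<beta> where "\<beta> \<in> Field r" "x = e \<beta>" by blast
    then have "x \<in> e ` underS r \<alpha>" if "(\<beta>, \<alpha>) \<in> r" "\<alpha> \<noteq> \<beta>" for \<alpha>
      using that by (auto simp: underS_def)
    with True \<open>\<beta> \<in> Field r\<close> \<open>\<epsilon> > 0\<close> show ?thesis by force
  next
    case False
    with assms(1) \<open>\<epsilon> > 0\<close> show ?thesis by auto
  qed
qed

lemma null_if_card_less_nonN:
  fixes B :: "real set"
  assumes "is_nonN r" and "B \<subseteq> {0..1}" and "|B| <o r"
  shows "B \<in> null_sets lebesgue"
proof (rule ccontr)
  assume "B \<notin> null_sets lebesgue"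
  with assms(1,2) have "r \<le>o |B|" unfolding is_nonN_def by blast
  with not_ordLess_ordLeq[OF assms(3)] show False by contradiction
qed

lemma null_image_underS_nonN:
  fixes e :: "'a \<Rightarrow> real"
  assumes "is_nonN r" and "\<alpha> \<in> Field r" and "e ` Field r \<subseteq> {0..1}"
  shows "e ` underS r \<alpha> \<in> null_sets lebesgue"
proof (rule null_if_card_less_nonN[OF assms(1)])
  show "e ` underS r \<alpha> \<subseteq> {0..1}"
    using image_mono[OF Order_Relation.underS_Field] assms(3) by (rule order_trans)
  have "Card_order r" using assms(1) by (simp add: is_nonN_def)
  have "|e ` underS r \<alpha>| \<le>o |underS r \<alpha>|" by (rule card_of_image)
  also have "|underS r \<alpha>| <o r" using \<open>Card_order r\<close> assms(2) by (rule card_of_underS)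
  finally show "|e ` underS r \<alpha>| <o r" .
qed

theorem mainTheorem19:
  fixes r :: "'a rel"
  assumes "is_nonN r"
  shows "(borel_measurable lebesgue :: (real \<Rightarrow> real) set) \<subset> LIM_wo r (borel_measurable lebesgue)"
proof -
  from assms obtain A :: "real set" where
    A: "A \<subseteq> {0..1}" "A \<notin> null_sets lebesgue" and "Card_order r" "|A| =o r"
    unfolding is_nonN_def by blast
  have "|Field r| =o |A|"
    using card_of_Field_ordIso[OF \<open>Card_order r\<close>] ordIso_symmetric[OF \<open>|A| =o r\<close>]
    by (rule ordIso_transitive)
  then obtain e where e: "bij_betw e (Field r) A" using card_of_ordIso by blast
  then have "Field r \<noteq> {}" using A(2) by (auto simp: bij_betw_def)
  obtain S :: "real set" where "S \<subseteq> A" and S: "S \<notin> sets lebesgue"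
    using non_null_has_nonmeasurable_subset[OF A] by blast
  have "indicator (S \<inter> e ` underS r \<alpha>) \<in> borel_measurable lebesgue" if "\<alpha> \<in> Field r" for \<alpha>
  proof -
    have "e ` underS r \<alpha> \<in> null_sets lebesgue"
      using null_image_underS_nonN[OF assms that] e A(1) by (auto simp: bij_betw_def)
    then have "S \<inter> e ` underS r \<alpha> \<in> null_sets lebesgue"
      by (rule completion.complete2[rotated]) blast
    then show ?thesis by (intro borel_measurable_indicator null_setsD2)
  qed
  moreover have "wo_pointwise_conv r (\<lambda>\<alpha>. indicator (S \<inter> e ` underS r \<alpha>)) (indicator S)"
    using \<open>Field r \<noteq> {}\<close> \<open>S \<subseteq> A\<close> e by (intro wo_pointwise_conv_indicator_underS) (auto simp: bij_betw_def)
  ultimately have "indicator S \<in> LIM_wo r (borel_measurable lebesgue)"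
    by (rule LIM_woI)
  moreover have "(indicator S :: real \<Rightarrow> real) \<notin> borel_measurable lebesgue"
    using S by (simp add: borel_measurable_indicator_iff)
  ultimately show ?thesis by (intro psubsetI subset_LIM_wo[OF \<open>Field r \<noteq> {}\<close>]) auto
qed

end
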